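(* Let $A_0,A_1,\dots,A_k\in\mathbb{C}^{n\times n}$ be pairwise commuting normal matrices. Then \[ \max_{v\in\mathbb{C}^n,\ \|v\|=1}\ \min_{\alpha_1,\dots,\alpha_k\in\mathbb{C}}\Big\|A_0v-\sum_{i=1}^k\alpha_iA_iv\Big\| \;=\; \min_{\alpha_1,\dots,\alpha_k\in\mathbb{C}}\Big\|A_0-\sum_{i=1}^k\alpha_iA_i\Big\|, \] where $\|\cdot\|$ denotes the Euclidean vector norm and the induced spectral matrix norm. *)

theory Defs
  imports "HOL-Analysis.Analysis"
begin

definition cadjoint :: "complex ^'n ^'m \<Rightarrow> complex ^'m ^'n" where
  "cadjoint A = (\<chi> i j. cnj (A $ j $ i))"

definition normal_matrix :: "complex ^'n ^'n \<Rightarrow> bool" where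
  "normal_matrix A \<longleftrightarrow> A ** cadjoint A = cadjoint A ** A"

definition spec_norm :: "complex ^'n ^'m \<Rightarrow> real" where
  "spec_norm A = onorm (\<lambda>v. A *v v)"

end

theory Submission
  imports Defs "HOL-Computational_Algebra.Fundamental_Theorem_Algebra"
begin

text \<open>
  Commuting normal matrices have a common orthonormal eigenbasis \<open>u\<^sub>j\<close>. In it every
  \<open>A\<^sub>0 - \<Sum>\<alpha>\<^sub>i A\<^sub>i\<close> is diagonal with entries \<open>b\<^sub>j - t(\<alpha>)\<^sub>j\<close>, where \<open>t(\<alpha>)\<close> ranges over a
  subspace \<open>T\<close> of \<open>\<complex>\<^sup>n\<close>, so the right-hand side is the max-norm distance \<open>d\<close> from \<open>b\<close> to \<open>T\<close>,
  and the left-hand side is at most \<open>d\<close>. Separating \<open>T\<close> from the open max-norm ball of radius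
  \<open>d\<close> around \<open>b\<close> gives probability weights \<open>w\<close> with \<open>\<Sum>\<^sub>j w\<^sub>j |b\<^sub>j - t\<^sub>j| \<ge> d\<close> on all of \<open>T\<close>.
  For the unit vector \<open>v = \<Sum>\<^sub>j \<surd>w\<^sub>j u\<^sub>j\<close>, Jensen's inequality then gives
  \<open>\<parallel>(A\<^sub>0 - \<Sum>\<alpha>\<^sub>i A\<^sub>i) v\<parallel>\<^sup>2 = \<Sum>\<^sub>j w\<^sub>j |b\<^sub>j - t(\<alpha>)\<^sub>j|\<^sup>2 \<ge> d\<^sup>2\<close> for every \<open>\<alpha>\<close>.
\<close>

section \<open>Complex inner product and adjoints\<close>

lemma norm_smult_vec: "norm (c *s x) = norm c * norm (x::'a::real_normed_field^'n)"
  by (simp add: norm_vec_def norm_mult L2_set_right_distrib)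

definition cinner :: "complex^'n \<Rightarrow> complex^'n \<Rightarrow> complex" where
  "cinner x y = (\<Sum>j\<in>UNIV. cnj (x$j) * y$j)"

lemma cinner_add_right: "cinner x (y + z) = cinner x y + cinner x z"
  by (simp add: cinner_def distrib_left sum.distrib)

lemma cinner_diff_left: "cinner (x - y) z = cinner x z - cinner y z"
  by (simp add: cinner_def left_diff_distrib sum_subtractf)

lemma cinner_diff_right: "cinner x (y - z) = cinner x y - cinner x z"
  by (simp add: cinner_def right_diff_distrib sum_subtractf)

lemma cinner_scale_left: "cinner (c *s x) y = cnj c * cinner x y"
  by (simp add: cinner_def sum_distrib_left mult.assoc)

lemma cinner_scale_right: "cinner x (c *s y) = c * cinner x y"
  by (simp add: cinner_def sum_distrib_left mult.left_commute)

lemma cinner_sum_left: "cinner (sum f S) y = (\<Sum>i\<in>S. cinner (f i) y)"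
  unfolding cinner_def sum_component cnj_sum sum_distrib_right by (rule sum.swap)

lemma cinner_sum_right: "cinner x (sum f S) = (\<Sum>i\<in>S. cinner x (f i))"
  unfolding cinner_def sum_component sum_distrib_left by (rule sum.swap)

lemma cinner_zero_right [simp]: "cinner x 0 = 0"
  by (simp add: cinner_def)

lemma cinner_commute: "cinner y x = cnj (cinner x y)"
  by (simp add: cinner_def mult.commute)

lemma cinner_self: "cinner x x = of_real ((norm x)\<^sup>2)"
proof -
  have "Im (cinner x x) = 0"
    by (simp add: cinner_def)
  moreover have "Re (cinner x x) = (norm x)\<^sup>2"
    by (simp add: cinner_def power2_norm_eq_inner inner_vec_def inner_complex_def)
  ultimately show ?thesis
    by (simp add: complex_eq_iff)
qed

lemma cinner_self_eq_0 [simp]: "cinner x x = 0 \<longleftrightarrow> x = 0"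
  by (simp add: cinner_self)

lemma cadjoint_cadjoint [simp]: "cadjoint (cadjoint A) = A"
  by (simp add: cadjoint_def vec_eq_iff)

lemma cinner_cadjoint_left: "cinner (cadjoint A *v x) y = cinner x (A *v y)"
proof -
  have "cinner x (A *v y) = (\<Sum>j\<in>UNIV. \<Sum>r\<in>UNIV. cnj (x$j) * (A$j$r * y$r))"
    unfolding cinner_def matrix_vector_mult_def by (simp add: sum_distrib_left)
  also have "\<dots> = (\<Sum>r\<in>UNIV. \<Sum>j\<in>UNIV. cnj (x$j) * (A$j$r * y$r))"
    by (rule sum.swap)
  also have "\<dots> = cinner (cadjoint A *v x) y"
    unfolding cinner_def matrix_vector_mult_def cadjoint_def
    by (simp add: sum_distrib_left sum_distrib_right mult_ac)
  finally show ?thesis ..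
qed

lemma cinner_cadjoint_right: "cinner (A *v x) y = cinner x (cadjoint A *v y)"
  by (metis cadjoint_cadjoint cinner_cadjoint_left)

lemma normal_matrix_eigenvector_cadjoint:
  assumes "normal_matrix A" and "A *v u = l *s u"
  shows "cadjoint A *v u = cnj l *s u"
proof -
  let ?B = "cadjoint A"
  have "cinner (?B *v u) (?B *v u) = cinner u ((A ** ?B) *v u)"
    by (simp add: cinner_cadjoint_right matrix_vector_mul_assoc)
  also have "\<dots> = cinner u (?B *v (A *v u))"
    using assms(1) by (simp add: normal_matrix_def matrix_vector_mul_assoc)
  also have "\<dots> = l * cinner (A *v u) u"
    by (metis assms(2) cinner_scale_right cinner_cadjoint_right)
  also have "\<dots> = cnj l * l * cinner u u"
    by (simp add: assms(2) cinner_scale_left)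
  finally have "cinner (?B *v u) (?B *v u) = cnj l * l * cinner u u" .
  moreover have "cinner (?B *v u) u = l * cinner u u" "cinner u (?B *v u) = cnj l * cinner u u"
    by (simp_all add: cinner_cadjoint_left cinner_cadjoint_right[symmetric] assms(2)
        cinner_scale_left cinner_scale_right)
  ultimately have "cinner (?B *v u - cnj l *s u) (?B *v u - cnj l *s u) = 0"
    by (simp add: cinner_diff_left cinner_diff_right cinner_scale_left cinner_scale_right
        algebra_simps)
  then show ?thesis
    by simp
qed

section \<open>Common eigenvectors in invariant subspaces\<close>

definition poly_matrix_apply :: "complex^'n^'n \<Rightarrow> complex poly \<Rightarrow> complex^'n \<Rightarrow> complex^'n" where
  "poly_matrix_apply A p x = (\<Sum>k\<le>degree p. coeff p k *s ((*v) A ^^ k) x)"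

lemma poly_matrix_apply_eq_sum:
  assumes "degree p \<le> N"
  shows "poly_matrix_apply A p x = (\<Sum>k\<le>N. coeff p k *s ((*v) A ^^ k) x)"
  unfolding poly_matrix_apply_def
  by (rule sum.mono_neutral_left) (use assms in \<open>auto simp: coeff_eq_0\<close>)

lemma poly_matrix_apply_linear_factor:
  "poly_matrix_apply A ([:-c, 1:] * q) x =
     A *v poly_matrix_apply A q x - c *s poly_matrix_apply A q x"
proof -
  let ?F = "(*v) A" and ?N = "Suc (degree q)"
  have deg: "degree ([:-c, 1:] * q) \<le> ?N"
    using degree_mult_le[of "[:-c, 1:]" q] by simp
  have "poly_matrix_apply A ([:-c, 1:] * q) x =
      (\<Sum>k\<le>?N. coeff (pCons 0 q) k *s (?F ^^ k) x) - c *s (\<Sum>k\<le>?N. coeff q k *s (?F ^^ k) x)"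
    unfolding poly_matrix_apply_eq_sum[OF deg] sum_cmul[symmetric] sum_subtractf[symmetric]
    by (rule sum.cong) (simp_all add: algebra_simps)
  also have "(\<Sum>k\<le>?N. coeff (pCons 0 q) k *s (?F ^^ k) x) = A *v poly_matrix_apply A q x"
    by (simp add: sum.atMost_Suc_shift poly_matrix_apply_def vec.sum vec.scale del: sum.atMost_Suc)
  finally show ?thesis
    by (simp add: poly_matrix_apply_eq_sum[of q ?N])
qed

lemma poly_matrix_apply_in_invariant_subspace:
  assumes "vec.subspace W" "\<And>y. y \<in> W \<Longrightarrow> A *v y \<in> W" "x \<in> W"
  shows "poly_matrix_apply A p x \<in> W"
proof -
  have "((*v) A ^^ k) x \<in> W" for k
    by (induction k) (simp_all add: assms)
  then show ?thesis
    unfolding poly_matrix_apply_def by (intro vec.subspace_sum vec.subspace_scale assms(1))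
qed

lemma eigenvector_from_annihilating_poly:
  assumes W: "vec.subspace W" and inv: "\<And>y. y \<in> W \<Longrightarrow> A *v y \<in> W"
    and "p \<noteq> 0" "x \<in> W" "x \<noteq> 0" "poly_matrix_apply A p x = 0"
  shows "\<exists>v\<in>W. v \<noteq> 0 \<and> (\<exists>l. A *v v = l *s v)"
  using assms(3-)
proof (induction "degree p" arbitrary: p rule: less_induct)
  case less
  show ?case
  proof (cases "degree p = 0")
    case True
    then have "poly_matrix_apply A p x = coeff p 0 *s x" "coeff p 0 \<noteq> 0"
      using less.prems(1) leading_coeff_0_iff[of p] by (simp_all add: poly_matrix_apply_def)
    then show ?thesis
      using less.prems by simp
  next
    case False
    then obtain c where "poly p c = 0"
      using fundamental_theorem_of_algebra[of p] by (auto simp: constant_degree)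
    then have p: "p = [:-c, 1:] * synthetic_div p c"
      using synthetic_div_correct'[of c p] by simp
    \<comment> \<open>\<open>p = (X - c) q\<close>: either \<open>q(A) x\<close> is an eigenvector for \<open>c\<close>, or \<open>q\<close> annihilates \<open>x\<close>\<close>
    define q where "q = synthetic_div p c"
    define y where "y = poly_matrix_apply A q x"
    have "A *v y = c *s y"
      using less.prems(4) poly_matrix_apply_linear_factor[of A c q x] p by (simp add: y_def q_def)
    moreover have "y \<in> W"
      unfolding y_def by (rule poly_matrix_apply_in_invariant_subspace[OF W inv less.prems(2)])
    moreover have "degree q < degree p" "q \<noteq> 0"
      using False less.prems(1) p by (auto simp: q_def degree_synthetic_div)
    ultimately show ?thesis
      using less.hyps[of q] less.prems(2,3) by (cases "y = 0") (auto simp: y_def)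
  qed
qed

lemma exists_nontrivial_linear_relation:
  fixes f :: "nat \<Rightarrow> 'a::field^'n"
  shows "\<exists>c. (\<exists>k\<le>CARD('n). c k \<noteq> 0) \<and> (\<Sum>k\<le>CARD('n). c k *s f k) = 0"
proof (cases "inj_on f {..CARD('n)}")
  case True
  let ?S = "f ` {..CARD('n)}"
  have "vec.dependent ?S"
    using vec.independent_card_le_dim[of ?S UNIV] True by (auto simp: card_image card_cart_basis)
  then obtain u where "\<exists>v\<in>?S. u v \<noteq> 0" "(\<Sum>v\<in>?S. u v *s v) = 0"
    using vec.dependent_finite[of ?S] by blast
  then show ?thesis
    by (intro exI[of _ "u \<circ> f"]) (auto simp: sum.reindex[OF True])
next
  case False
  then obtain a b where ab: "a \<le> CARD('n)" "b \<le> CARD('n)" "a \<noteq> b" "f a = f b"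
    by (auto simp: inj_on_def)
  define c :: "nat \<Rightarrow> 'a" where "c k = (if k = a then 1 else if k = b then -1 else 0)" for k
  have "(\<Sum>k\<le>CARD('n). c k *s f k) =
      (\<Sum>k\<le>CARD('n). if k = a then f a else 0) - (\<Sum>k\<le>CARD('n). if k = b then f b else 0)"
    unfolding sum_subtractf[symmetric] by (rule sum.cong) (use ab in \<open>auto simp: c_def\<close>)
  then show ?thesis
    using ab by (intro exI[of _ c]) (auto simp: c_def)
qed

lemma eigenvector_in_invariant_subspace:
  fixes A :: "complex^'n^'n"
  assumes W: "vec.subspace W" and inv: "\<And>y. y \<in> W \<Longrightarrow> A *v y \<in> W"
    and x: "x \<in> W" "x \<noteq> 0"
  shows "\<exists>v\<in>W. v \<noteq> 0 \<and> (\<exists>l. A *v v = l *s v)"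
proof -
  obtain c where c: "\<exists>k\<le>CARD('n). c k \<noteq> 0" "(\<Sum>k\<le>CARD('n). c k *s ((*v) A ^^ k) x) = 0"
    using exists_nontrivial_linear_relation[of "\<lambda>k. ((*v) A ^^ k) x"] by blast
  define p where "p = (\<Sum>k\<le>CARD('n). monom (c k) k)"
  have coeff_p: "coeff p k = (if k \<le> CARD('n) then c k else 0)" for k
    by (simp add: p_def coeff_sum coeff_monom)
  have "p \<noteq> 0"
    using c(1) by (auto simp: poly_eq_iff coeff_p)
  have "degree p \<le> CARD('n)"
    by (rule degree_le) (simp add: coeff_p)
  then have "poly_matrix_apply A p x = 0"
    using c(2) by (simp add: poly_matrix_apply_eq_sum coeff_p)
  with \<open>p \<noteq> 0\<close> x show ?thesis
    by (intro eigenvector_from_annihilating_poly[OF W inv]) simp_all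
qed

lemma common_eigenvector_in_invariant_subspace:
  fixes A :: "nat \<Rightarrow> complex^'n^'n"
  assumes "vec.subspace W" "\<And>i y. i < m \<Longrightarrow> y \<in> W \<Longrightarrow> A i *v y \<in> W"
    and "\<And>i j. i < m \<Longrightarrow> j < m \<Longrightarrow> A i ** A j = A j ** A i"
    and "x \<in> W" "x \<noteq> 0"
  shows "\<exists>v\<in>W. v \<noteq> 0 \<and> (\<forall>i<m. \<exists>l. A i *v v = l *s v)"
  using assms
proof (induction m arbitrary: W x)
  case 0
  then show ?case by auto
next
  case (Suc m)
  obtain v0 l where v0: "v0 \<in> W" "v0 \<noteq> 0" "A m *v v0 = l *s v0"
    using eigenvector_in_invariant_subspace[of W "A m" x] Suc.prems by auto
  define E where "E = {y \<in> W. A m *v y = l *s y}"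
  have "vec.subspace E"
    using Suc.prems(1) unfolding vec.subspace_def E_def by (simp add: vec.add vec.scale)
  moreover have "A i *v y \<in> E" if "i < m" "y \<in> E" for i y
  proof -
    have "A m *v (A i *v y) = A i *v (A m *v y)"
      using Suc.prems(3)[of m i] that(1) by (simp add: matrix_vector_mul_assoc)
    then show ?thesis
      using that Suc.prems(2) by (simp add: E_def vec.scale)
  qed
  ultimately obtain v where "v \<in> E" "v \<noteq> 0" "\<forall>i<m. \<exists>l. A i *v v = l *s v"
    using Suc.IH[of E v0] Suc.prems(3) v0 by (auto simp: E_def)
  then show ?case
    by (auto simp: E_def less_Suc_eq)
qed

section \<open>Orthonormal common eigenbases\<close>

lemma exists_nonzero_orthogonal:
  fixes U :: "'n \<Rightarrow> complex^'n"
  assumes "S \<noteq> UNIV"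
  shows "\<exists>x. x \<noteq> 0 \<and> (\<forall>j\<in>S. cinner (U j) x = 0)"
proof -
  obtain a where "a \<notin> S"
    using assms by blast
  define R :: "complex^'n^'n" where "R = (\<chi> j r. if j \<in> S then cnj (U j $ r) else 0)"
  have "det R = 0"
    by (rule det_zero_row(2)[of a]) (use \<open>a \<notin> S\<close> in \<open>simp add: R_def row_def vec_eq_iff\<close>)
  then obtain x where "x \<noteq> 0" "R *v x = 0"
    by (metis invertible_det_nz invertible_left_inverse matrix_left_invertible_ker)
  moreover have "(R *v x) $ j = cinner (U j) x" if "j \<in> S" for j
    using that by (simp add: R_def matrix_vector_mult_def cinner_def)
  ultimately show ?thesis
    by auto
qed

lemma normal_matrix_cinner_eigenvector:
  assumes "normal_matrix A" "A *v u = l *s u" "cinner u x = 0"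
  shows "cinner u (A *v x) = 0"
  using normal_matrix_eigenvector_cadjoint[OF assms(1,2)] assms(3)
  by (simp add: cinner_cadjoint_left[symmetric] cinner_scale_left)

lemma common_eigenvector_orthogonal:
  fixes A :: "nat \<Rightarrow> complex^'n^'n" and U :: "'n \<Rightarrow> complex^'n"
  assumes normal: "\<And>i. i \<le> k \<Longrightarrow> normal_matrix (A i)"
    and commute: "\<And>i j. i \<le> k \<Longrightarrow> j \<le> k \<Longrightarrow> A i ** A j = A j ** A i"
    and eigen: "\<And>i j. i \<le> k \<Longrightarrow> j \<in> S \<Longrightarrow> \<exists>l. A i *v U j = l *s U j"
    and "S \<noteq> UNIV"
  obtains v where "norm v = 1" "\<forall>j\<in>S. cinner (U j) v = 0" "\<forall>i\<le>k. \<exists>l. A i *v v = l *s v"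
proof -
  define W where "W = {x. \<forall>j\<in>S. cinner (U j) x = 0}"
  have "vec.subspace W"
    by (auto simp: vec.subspace_def W_def cinner_add_right cinner_scale_right)
  moreover have "A i *v x \<in> W" if "i < Suc k" "x \<in> W" for i x
    using normal_matrix_cinner_eigenvector normal eigen that by (fastforce simp: W_def less_Suc_eq_le)
  moreover obtain x where "x \<in> W" "x \<noteq> 0"
    using exists_nonzero_orthogonal[OF \<open>S \<noteq> UNIV\<close>] by (auto simp: W_def)
  ultimately obtain v where v: "v \<in> W" "v \<noteq> 0" "\<forall>i<Suc k. \<exists>l. A i *v v = l *s v"
    using common_eigenvector_in_invariant_subspace[of W "Suc k" A x] commute by auto
  define u where "u = of_real (1 / norm v) *s v"
  show ?thesis
  proof (rule that)
    show "norm u = 1"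
      using v(2) by (simp add: u_def norm_smult_vec norm_divide)
    show "\<forall>j\<in>S. cinner (U j) u = 0"
      using v(1) by (simp add: u_def W_def cinner_scale_right)
    show "\<forall>i\<le>k. \<exists>l. A i *v u = l *s u"
      using v(3) by (auto simp: u_def vec.scale less_Suc_eq_le)
  qed
qed

definition orthonormal_on :: "'i set \<Rightarrow> ('i \<Rightarrow> complex^'n) \<Rightarrow> bool" where
  "orthonormal_on S U \<longleftrightarrow> (\<forall>i\<in>S. \<forall>j\<in>S. cinner (U i) (U j) = (if i = j then 1 else 0))"

lemma orthonormal_on_insert:
  assumes "orthonormal_on S U" "a \<notin> S" "cinner v v = 1" "\<And>j. j \<in> S \<Longrightarrow> cinner (U j) v = 0"
  shows "orthonormal_on (insert a S) (U(a := v))"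
  unfolding orthonormal_on_def
proof (intro ballI)
  fix i j assume "i \<in> insert a S" "j \<in> insert a S"
  moreover have "cinner v (U j) = 0" if "j \<in> S" for j
    using assms(4)[OF that] cinner_commute[of v "U j"] by simp
  ultimately show "cinner ((U(a := v)) i) ((U(a := v)) j) = (if i = j then 1 else 0)"
    using assms(1-4) unfolding orthonormal_on_def by (cases "i = a"; cases "j = a") auto
qed

lemma orthonormal_common_eigenbasis:
  fixes A :: "nat \<Rightarrow> complex^'n^'n"
  assumes normal: "\<And>i. i \<le> k \<Longrightarrow> normal_matrix (A i)"
    and commute: "\<And>i j. i \<le> k \<Longrightarrow> j \<le> k \<Longrightarrow> A i ** A j = A j ** A i"
  obtains U :: "'n \<Rightarrow> complex^'n" and lam
  where "orthonormal_on UNIV U" "\<And>i j. i \<le> k \<Longrightarrow> A i *v U j = lam i j *s U j"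
proof -
  have "\<exists>U::'n \<Rightarrow> complex^'n. orthonormal_on S U \<and> (\<forall>i\<le>k. \<forall>j\<in>S. \<exists>l. A i *v U j = l *s U j)"
    for S :: "'n set"
  proof (induction S rule: finite_induct[OF finite])
    case 1
    then show ?case
      by (simp add: orthonormal_on_def)
  next
    case (2 a S)
    then obtain U where U: "orthonormal_on S U" "\<forall>i\<le>k. \<forall>j\<in>S. \<exists>l. A i *v U j = l *s U j"
      by blast
    have "S \<noteq> UNIV"
      using 2(2) by blast
    obtain u where u: "norm u = 1" "\<forall>j\<in>S. cinner (U j) u = 0" "\<forall>i\<le>k. \<exists>l. A i *v u = l *s u"
      by (rule common_eigenvector_orthogonal[where A=A and k=k and S=S and U=U, OF normal commute])
        (use U(2) \<open>S \<noteq> UNIV\<close> in auto)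
    then have "orthonormal_on (insert a S) (U(a := u))"
      using orthonormal_on_insert[OF U(1) 2(2)] by (simp add: cinner_self)
    moreover have "\<forall>i\<le>k. \<forall>j\<in>insert a S. \<exists>l. A i *v (U(a := u)) j = l *s (U(a := u)) j"
      using U(2) u(3) by auto
    ultimately show ?case
      by blast
  qed
  from this[of UNIV] obtain U :: "'n \<Rightarrow> complex^'n"
    where U: "orthonormal_on UNIV U" "\<forall>i\<le>k. \<forall>j. \<exists>l. A i *v U j = l *s U j"
    by blast
  define lam where "lam i j = (SOME l. A i *v U j = l *s U j)" for i j
  have "A i *v U j = lam i j *s U j" if "i \<le> k" for i j
    unfolding lam_def by (rule someI_ex) (use U(2) that in blast)
  with U(1) show ?thesis
    by (rule that)
qed

lemma orthonormal_expansion: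
  fixes U :: "'n \<Rightarrow> complex^'n"
  assumes "orthonormal_on UNIV U"
  shows "x = (\<Sum>j\<in>UNIV. cinner (U j) x *s U j)"
proof -
  \<comment> \<open>the matrix with columns \<open>U j\<close> is unitary, so also \<open>Q Q\<^sup>* = 1\<close>\<close>
  define Q :: "complex^'n^'n" where "Q = (\<chi> r j. U j $ r)"
  have "cadjoint Q ** Q = mat 1"
    using assms by (simp add: orthonormal_on_def vec_eq_iff matrix_matrix_mult_def cadjoint_def
        mat_def Q_def cinner_def)
  then have "Q ** cadjoint Q = mat 1"
    using matrix_left_right_inverse by blast
  then have QQ: "(\<Sum>j\<in>UNIV. U j $ r * cnj (U j $ s)) = (if r = s then 1 else 0)" for r s
    by (auto simp: vec_eq_iff matrix_matrix_mult_def cadjoint_def mat_def Q_def dest: spec[of _ r])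
  have "(\<Sum>j\<in>UNIV. cinner (U j) x *s U j) $ r = x $ r" for r
  proof -
    have "(\<Sum>j\<in>UNIV. cinner (U j) x *s U j) $ r =
        (\<Sum>s\<in>UNIV. \<Sum>j\<in>UNIV. U j $ r * cnj (U j $ s) * x $ s)"
      by (subst sum.swap) (simp add: sum_component cinner_def sum_distrib_right sum_distrib_left mult_ac)
    also have "\<dots> = (\<Sum>s\<in>UNIV. if s = r then x $ s else 0)"
      by (rule sum.cong) (simp_all add: sum_distrib_right[symmetric] QQ)
    finally show ?thesis
      by simp
  qed
  then show ?thesis
    by (simp add: vec_eq_iff)
qed

lemma cinner_orthonormal_combination:
  fixes U :: "'n \<Rightarrow> complex^'n"
  assumes "orthonormal_on UNIV U"
  shows "cinner (U i) (\<Sum>j\<in>UNIV. c j *s U j) = c i"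
proof -
  have "cinner (U i) (\<Sum>j\<in>UNIV. c j *s U j) = (\<Sum>j\<in>UNIV. if j = i then c j else 0)"
    unfolding cinner_sum_right cinner_scale_right
    by (rule sum.cong) (use assms in \<open>auto simp: orthonormal_on_def\<close>)
  then show ?thesis
    by simp
qed

lemma norm_orthonormal_combination:
  fixes U :: "'n \<Rightarrow> complex^'n"
  assumes "orthonormal_on UNIV U"
  shows "(norm (\<Sum>j\<in>UNIV. c j *s U j))\<^sup>2 = (\<Sum>j\<in>UNIV. (cmod (c j))\<^sup>2)"
proof -
  let ?v = "\<Sum>j\<in>UNIV. c j *s U j"
  have "of_real ((norm ?v)\<^sup>2) = cinner ?v ?v"
    by (rule cinner_self[symmetric])
  also have "\<dots> = (\<Sum>j\<in>UNIV. cnj (c j) * c j)"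
    by (simp add: cinner_sum_left cinner_scale_left cinner_orthonormal_combination[OF assms])
  also have "\<dots> = of_real (\<Sum>j\<in>UNIV. (cmod (c j))\<^sup>2)"
    unfolding of_real_sum complex_norm_square by (simp add: mult.commute)
  finally show ?thesis
    using of_real_eq_iff by blast
qed

lemma norm_mult_orthonormal_eigenbasis:
  fixes U :: "'n \<Rightarrow> complex^'n" and M :: "complex^'n^'n"
  assumes "orthonormal_on UNIV U" and "\<And>j. M *v U j = m j *s U j"
  shows "(norm (M *v x))\<^sup>2 = (\<Sum>j\<in>UNIV. (cmod (cinner (U j) x))\<^sup>2 * (cmod (m j))\<^sup>2)"
proof -
  have "M *v x = (\<Sum>j\<in>UNIV. (cinner (U j) x * m j) *s U j)"
    by (subst orthonormal_expansion[OF assms(1), of x]) (simp add: vec.sum vec.scale assms(2))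
  then show ?thesis
    using norm_orthonormal_combination[OF assms(1)] by (simp add: norm_mult power_mult_distrib)
qed

lemma norm_orthonormal_on:
  assumes "orthonormal_on S U" "j \<in> S"
  shows "norm (U j) = 1"
proof -
  have "cinner (U j) (U j) = 1"
    using assms by (simp add: orthonormal_on_def)
  then have "(norm (U j))\<^sup>2 = 1"
    unfolding cinner_self of_real_eq_1_iff .
  then show ?thesis
    using norm_ge_zero[of "U j"] by (auto simp: power2_eq_1_iff)
qed

lemma MAX_attained: "\<exists>j. (MAX j. f j) = f j" for f :: "'i::finite \<Rightarrow> 'a::linorder"
proof -
  have "(MAX j. f j) \<in> range f"
    by (rule Max_in) simp_all
  then show ?thesis
    by (metis imageE)
qed

lemma spec_norm_nonneg: "0 \<le> spec_norm A"
  unfolding spec_norm_def by (rule onorm_pos_le) simp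

lemma norm_matrix_vector_mult_le_spec_norm: "norm (A *v x) \<le> spec_norm A * norm x"
  unfolding spec_norm_def by (rule onorm) simp

lemma spec_norm_orthonormal_eigenbasis:
  fixes U :: "'n \<Rightarrow> complex^'n" and M :: "complex^'n^'n"
  assumes U: "orthonormal_on UNIV U" and eigen: "\<And>j. M *v U j = m j *s U j"
  shows "spec_norm M = (MAX j. cmod (m j))"
proof (rule antisym)
  let ?b = "MAX j. cmod (m j)"
  have "norm (M *v x) \<le> ?b * norm x" for x
  proof (rule power2_le_imp_le)
    have "(norm (M *v x))\<^sup>2 \<le> (\<Sum>j\<in>UNIV. (cmod (cinner (U j) x))\<^sup>2 * ?b\<^sup>2)"
      unfolding norm_mult_orthonormal_eigenbasis[OF U eigen]
      by (intro sum_mono mult_left_mono power_mono) auto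
    also have "\<dots> = (?b * norm x)\<^sup>2"
      using norm_mult_orthonormal_eigenbasis[OF U, of "mat 1" "\<lambda>_. 1" x]
      by (simp add: sum_distrib_left power_mult_distrib mult_ac)
    finally show "(norm (M *v x))\<^sup>2 \<le> (?b * norm x)\<^sup>2" .
  qed (auto intro!: mult_nonneg_nonneg order_trans[OF norm_ge_zero Max_ge])
  then show "spec_norm M \<le> ?b"
    unfolding spec_norm_def by (rule onorm_le)
next
  obtain j where "(MAX j. cmod (m j)) = cmod (m j)"
    using MAX_attained by blast
  moreover have "norm (U j) = 1"
    using U by (rule norm_orthonormal_on) simp
  ultimately show "(MAX j. cmod (m j)) \<le> spec_norm M"
    using norm_matrix_vector_mult_le_spec_norm[of M "U j"] by (simp add: eigen norm_smult_vec)
qed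


section \<open>Max-norm distance to a subspace\<close>

lemma separating_hyperplane_subspace:
  fixes C T :: "'a::euclidean_space set"
  assumes "convex C" "C \<noteq> {}" "subspace T" "C \<inter> T = {}"
  shows "\<exists>a. a \<noteq> 0 \<and> (\<forall>t\<in>T. inner a t = 0) \<and> (\<forall>x\<in>C. inner a x \<le> 0)"
proof -
  obtain a \<beta> where a: "a \<noteq> 0" "\<forall>x\<in>C. inner a x \<le> \<beta>" "\<forall>t\<in>T. \<beta> \<le> inner a t"
    using separating_hyperplane_sets[OF assms(1) subspace_imp_convex[OF assms(3)] assms(2) _ assms(4)]
      subspace_0[OF assms(3)] by blast
  have "inner a t = 0" if "t \<in> T" for t
  proof (rule ccontr)
    assume "inner a t \<noteq> 0"
    then have "inner a (((\<beta> - 1) / inner a t) *\<^sub>R t) = \<beta> - 1"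
      by simp
    moreover have "((\<beta> - 1) / inner a t) *\<^sub>R t \<in> T"
      using assms(3) that by (rule subspace_scale)
    ultimately show False
      using a(3) by fastforce
  qed
  moreover have "\<beta> \<le> 0"
    using a(3) subspace_0[OF assms(3)] by fastforce
  ultimately show ?thesis
    using a by force
qed

lemma inner_sgn_self: "inner (x::'a::real_inner) (sgn x) = norm x"
  by (cases "x = 0") (simp_all add: sgn_div_norm power2_norm_eq_inner[symmetric] power2_eq_square)

text \<open>LP duality for the max-norm distance from \<open>b\<close> to \<open>T\<close>: the weights are the normalised
  moduli of the coordinates of a hyperplane separating \<open>T\<close> from the open max-norm ball.\<close>

lemma weights_for_max_distance_to_subspace:
  fixes b :: "'a::euclidean_space ^'n" and T :: "('a ^'n) set"
  assumes T: "subspace T" and d: "d > 0"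
    and far: "\<And>t. t \<in> T \<Longrightarrow> \<exists>j. d \<le> norm (b$j - t$j)"
  obtains w where "\<And>j. 0 \<le> w j" "sum w UNIV = 1"
    "\<And>t. t \<in> T \<Longrightarrow> d \<le> (\<Sum>j\<in>UNIV. w j * norm (b$j - t$j))"
proof -
  define C where "C = {x. \<forall>j. x$j \<in> ball (b$j) d}"
  have "convex C"
    unfolding C_def by (rule convex_box_cart) (simp flip: mem_ball)
  moreover have "b \<in> C"
    using d by (simp add: C_def)
  moreover have "C \<inter> T = {}"
    using far by (fastforce simp: C_def dist_norm not_less[symmetric])
  ultimately obtain a where a: "a \<noteq> 0" "\<forall>t\<in>T. inner a t = 0" "\<forall>x\<in>C. inner a x \<le> 0"
    using separating_hyperplane_subspace[OF _ _ T] by blast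
  define L where "L = (\<Sum>j\<in>UNIV. norm (a$j))"
  obtain j0 where "a$j0 \<noteq> 0"
    using a(1) by (auto simp: vec_eq_iff)
  then have "L > 0"
    unfolding L_def by (intro sum_pos2[of UNIV j0]) auto
  define e where "e = (\<chi> j. sgn (a$j))"
  have "inner a e = L"
    by (simp add: inner_vec_def e_def inner_sgn_self L_def)
  then have shifted: "r * L \<le> - inner a b" if "0 \<le> r" "r < d" for r
    using a(3)[rule_format, of "b + r *\<^sub>R e"] that
    by (simp add: C_def e_def dist_norm norm_sgn inner_add_right order_le_less_trans[OF _ \<open>r < d\<close>])
  have "d \<le> - inner a b / L"
  proof (rule dense_le_bounded[OF d])
    fix r assume "0 < r" "r < d"
    then show "r \<le> - inner a b / L"
      using shifted[of r] \<open>L > 0\<close> by (simp add: field_simps)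
  qed
  then have dL: "d * L \<le> - inner a b"
    using \<open>L > 0\<close> by (simp add: field_simps)
  show ?thesis
  proof (rule that[of "\<lambda>j. norm (a$j) / L"])
    show "0 \<le> norm (a$j) / L" for j
      using \<open>L > 0\<close> by simp
    show "(\<Sum>j\<in>UNIV. norm (a$j) / L) = 1"
      using \<open>L > 0\<close> by (simp add: L_def sum_divide_distrib[symmetric])
    fix t assume "t \<in> T"
    have "d * L \<le> - inner a (b - t)"
      using dL a(2) \<open>t \<in> T\<close> by (simp add: inner_diff_right)
    also have "\<dots> = (\<Sum>j\<in>UNIV. - inner (a$j) (b$j - t$j))"
      by (simp add: inner_vec_def sum_negf)
    also have "\<dots> \<le> (\<Sum>j\<in>UNIV. norm (a$j) * norm (b$j - t$j))"
      by (intro sum_mono) (metis Cauchy_Schwarz_ineq2 abs_le_D2)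
    finally show "d \<le> (\<Sum>j\<in>UNIV. norm (a$j) / L * norm (b$j - t$j))"
      using \<open>L > 0\<close> by (simp add: sum_divide_distrib[symmetric] pos_le_divide_eq mult.commute)
  qed
qed

lemma exists_unit_vector_norm_ge:
  fixes U :: "'n \<Rightarrow> complex^'n" and M :: "'a \<Rightarrow> complex^'n^'n" and t :: "'a \<Rightarrow> complex^'n"
  assumes U: "orthonormal_on UNIV U"
    and eigen: "\<And>\<alpha> j. M \<alpha> *v U j = (b$j - t \<alpha> $ j) *s U j"
    and T: "subspace (range t)"
    and d: "0 \<le> d" "\<And>\<alpha>. d \<le> (MAX j. cmod (b$j - t \<alpha> $ j))"
  obtains v where "norm v = 1" "\<And>\<alpha>. d \<le> norm (M \<alpha> *v v)"
proof (cases "d = 0")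
  case True
  then show ?thesis
    using that[of "U undefined"] norm_orthonormal_on[OF U] by simp
next
  case False
  have far: "\<exists>j. d \<le> norm (b$j - s$j)" if "s \<in> range t" for s
  proof -
    obtain \<alpha> where "s = t \<alpha>"
      using \<open>s \<in> range t\<close> by blast
    moreover obtain j where "(MAX j. cmod (b$j - t \<alpha> $ j)) = cmod (b$j - t \<alpha> $ j)"
      using MAX_attained by blast
    ultimately show ?thesis
      using d(2)[of \<alpha>] by auto
  qed
  obtain w where w: "\<And>j. 0 \<le> w j" "sum w UNIV = 1"
    "\<And>s. s \<in> range t \<Longrightarrow> d \<le> (\<Sum>j\<in>UNIV. w j * norm (b$j - s$j))"
    using weights_for_max_distance_to_subspace[OF T _ far] False d(1) by auto
  define v where "v = (\<Sum>j\<in>UNIV. of_real (sqrt (w j)) *s U j)"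
  have "(norm v)\<^sup>2 = 1"
    using w(1,2) by (simp add: v_def norm_orthonormal_combination[OF U])
  then have "norm v = 1"
    using norm_ge_zero[of v] by (auto simp: power2_eq_1_iff)
  moreover have "d \<le> norm (M \<alpha> *v v)" for \<alpha>
  proof (rule power2_le_imp_le)
    define m where "m j = cmod (b$j - t \<alpha> $ j)" for j
    have "d\<^sup>2 \<le> (\<Sum>j\<in>UNIV. w j * m j)\<^sup>2"
      using w(3)[OF rangeI] d(1) by (simp add: m_def power_mono)
    also have "\<dots> \<le> (\<Sum>j\<in>UNIV. w j * (m j)\<^sup>2)"
      using convex_on_sum[OF _ _ convex_power2, of UNIV w m] w(1,2) by simp
    also have "\<dots> = (norm (M \<alpha> *v v))\<^sup>2"
      using w(1) by (simp add: norm_mult_orthonormal_eigenbasis[OF U eigen] v_def m_def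
          cinner_orthonormal_combination[OF U])
    finally show "d\<^sup>2 \<le> (norm (M \<alpha> *v v))\<^sup>2" .
  qed simp
  ultimately show ?thesis
    by (rule that)
qed

lemma SUP_INF_eq_INF_of_bounds:
  fixes f :: "'v \<Rightarrow> 'a \<Rightarrow> real" and g :: "'a \<Rightarrow> real"
  assumes le: "\<And>v \<alpha>. v \<in> S \<Longrightarrow> f v \<alpha> \<le> g \<alpha>" and nonneg: "\<And>v \<alpha>. 0 \<le> f v \<alpha>"
    and "v0 \<in> S" and ge: "\<And>\<alpha>. (INF \<alpha>. g \<alpha>) \<le> f v0 \<alpha>"
  shows "(SUP v\<in>S. INF \<alpha>. f v \<alpha>) = (INF \<alpha>. g \<alpha>)"
proof (rule antisym)
  have bdd: "bdd_below (range (f v))" for v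
    using nonneg by (intro bdd_belowI[of _ 0]) auto
  have upper: "(INF \<alpha>. f v \<alpha>) \<le> (INF \<alpha>. g \<alpha>)" if "v \<in> S" for v
    using le[OF that] by (intro cINF_mono bdd) auto
  then show "(SUP v\<in>S. INF \<alpha>. f v \<alpha>) \<le> (INF \<alpha>. g \<alpha>)"
    using \<open>v0 \<in> S\<close> by (intro cSUP_least) auto
  have "(INF \<alpha>. g \<alpha>) \<le> (INF \<alpha>. f v0 \<alpha>)"
    using ge by (intro cINF_greatest) auto
  also have "\<dots> \<le> (SUP v\<in>S. INF \<alpha>. f v \<alpha>)"
    using upper \<open>v0 \<in> S\<close> by (intro cSUP_upper bdd_aboveI2)
  finally show "(INF \<alpha>. g \<alpha>) \<le> (SUP v\<in>S. INF \<alpha>. f v \<alpha>)" .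
qed

section \<open>The minimax identity\<close>

lemma SUP_INF_norm_eq_INF_spec_norm:
  fixes U :: "'n \<Rightarrow> complex^'n" and M :: "'a \<Rightarrow> complex^'n^'n" and t :: "'a \<Rightarrow> complex^'n"
  assumes U: "orthonormal_on UNIV U"
    and eigen: "\<And>\<alpha> j. M \<alpha> *v U j = (b$j - t \<alpha> $ j) *s U j"
    and T: "subspace (range t)"
  shows "(SUP v\<in>{v. norm v = 1}. INF \<alpha>. norm (M \<alpha> *v v)) = (INF \<alpha>. spec_norm (M \<alpha>))"
proof -
  define d where "d = (INF \<alpha>. spec_norm (M \<alpha>))"
  have "0 \<le> d"
    unfolding d_def by (intro cINF_greatest spec_norm_nonneg) simp
  moreover have "d \<le> (MAX j. cmod (b$j - t \<alpha> $ j))" for \<alpha>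
    unfolding d_def spec_norm_orthonormal_eigenbasis[OF U eigen, symmetric]
    by (intro cINF_lower bdd_belowI[of _ 0]) (auto simp: spec_norm_nonneg)
  ultimately obtain v0 where "norm v0 = 1" "\<And>\<alpha>. d \<le> norm (M \<alpha> *v v0)"
    by (rule exists_unit_vector_norm_ge[OF U eigen T]) blast
  moreover have "norm (M \<alpha> *v v) \<le> spec_norm (M \<alpha>)" if "norm v = 1" for \<alpha> v
    using norm_matrix_vector_mult_le_spec_norm[of "M \<alpha>" v] that by simp
  ultimately show ?thesis
    unfolding d_def by (intro SUP_INF_eq_INF_of_bounds) auto
qed

lemma matrix_vector_mult_sum_left: "sum M S *v x = (\<Sum>i\<in>S. M i *v x)"
  by (induction S rule: infinite_finite_induct) (simp_all add: matrix_vector_mult_add_rdistrib)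

lemma mat_matrix_vector_mult: "mat c *v x = (c::'a::comm_ring_1) *s x"
proof -
  have "(\<Sum>j\<in>UNIV. (if i = j then c else 0) * x $ j) = c * x $ i" for i
    by (simp add: if_distrib[of "\<lambda>a. a * _"] cong: if_cong)
  then show ?thesis
    by (simp add: vec_eq_iff matrix_vector_mult_def mat_def)
qed

lemma subspace_range_linear_combination:
  "subspace (range (\<lambda>\<alpha>. \<chi> j. \<Sum>i\<in>I. \<alpha> i * (z i j :: complex)))"
proof (unfold subspace_def, safe)
  show "0 \<in> range (\<lambda>\<alpha>. \<chi> j. \<Sum>i\<in>I. \<alpha> i * z i j)"
    by (rule range_eqI[of _ _ "\<lambda>_. 0"]) (simp add: vec_eq_iff)
  show "(\<chi> j. \<Sum>i\<in>I. \<alpha> i * z i j) + (\<chi> j. \<Sum>i\<in>I. \<beta> i * z i j)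
      \<in> range (\<lambda>\<alpha>. \<chi> j. \<Sum>i\<in>I. \<alpha> i * z i j)" for \<alpha> \<beta>
    by (rule range_eqI[of _ _ "\<lambda>i. \<alpha> i + \<beta> i"]) (simp add: vec_eq_iff distrib_right sum.distrib)
  show "r *\<^sub>R (\<chi> j. \<Sum>i\<in>I. \<alpha> i * z i j) \<in> range (\<lambda>\<alpha>. \<chi> j. \<Sum>i\<in>I. \<alpha> i * z i j)" for r \<alpha>
    by (rule range_eqI[of _ _ "\<lambda>i. of_real r * \<alpha> i"])
      (simp add: vec_eq_iff scaleR_conv_of_real[where 'a=complex] sum_distrib_left mult.assoc)
qed

theorem mainTheorem3:
  fixes A :: "nat \<Rightarrow> complex ^'n ^'n" and k :: nat
  assumes normal: "\<And>i. i \<le> k \<Longrightarrow> normal_matrix (A i)"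
    and commute: "\<And>i j. i \<le> k \<Longrightarrow> j \<le> k \<Longrightarrow> A i ** A j = A j ** A i"
  shows "(SUP v \<in> {v :: complex ^'n. norm v = 1}.
            INF \<alpha> :: nat \<Rightarrow> complex. norm (A 0 *v v - (\<Sum>i = 1..k. \<alpha> i *s (A i *v v))))
         = (INF \<alpha> :: nat \<Rightarrow> complex. spec_norm (A 0 - (\<Sum>i = 1..k. mat (\<alpha> i) ** A i)))"
proof -
  obtain U :: "'n \<Rightarrow> complex^'n" and lam where U: "orthonormal_on UNIV U"
    and lam: "\<And>i j. i \<le> k \<Longrightarrow> A i *v U j = lam i j *s U j"
    using orthonormal_common_eigenbasis[where A=A and k=k, OF normal commute] by blast
  define b :: "complex^'n" where "b = (\<chi> j. lam 0 j)"
  define t where "t \<alpha> = (\<chi> j. \<Sum>i = 1..k. \<alpha> i * lam i j)" for \<alpha> :: "nat \<Rightarrow> complex"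
  have N_apply: "(A 0 - (\<Sum>i = 1..k. mat (\<alpha> i) ** A i)) *v v = A 0 *v v - (\<Sum>i = 1..k. \<alpha> i *s (A i *v v))"
    for \<alpha> v
    by (simp add: matrix_vector_mult_diff_rdistrib matrix_vector_mult_sum_left
        flip: matrix_vector_mul_assoc mat_matrix_vector_mult)
  have "(A 0 - (\<Sum>i = 1..k. mat (\<alpha> i) ** A i)) *v U j = (b$j - t \<alpha> $ j) *s U j" for \<alpha> j
    unfolding N_apply by (simp add: lam b_def t_def vec.scale_sum_left)
  moreover have "subspace (range t)"
    unfolding t_def by (rule subspace_range_linear_combination)
  ultimately show ?thesis
    unfolding N_apply[symmetric] by (rule SUP_INF_norm_eq_INF_spec_norm[OF U])
qed

end
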